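(* Let $n\ge 1$, $\mathbb{K}$ a field, $S=\mathbb{K}[x_1,\dots,x_n]$, and \[M_n^{(1)}=\langle x_i^{\,n} : 1\le i\le n\rangle+\langle x_i^{\,n-1}x_j^{\,n-1} : 1\le i<j\le n\rangle\subset S .\] Let $\tilde{\mathcal Q}_{K_{n+1}}$ be the reduced signless Laplacian of the complete graph $K_{n+1}$, i.e. the $n\times n$ matrix with every diagonal entry equal to $n$ and every off-diagonal entry equal to $1$. Then \[\dim_{\mathbb{K}} S/M_n^{(1)}=\det \tilde{\mathcal Q}_{K_{n+1}} .\]
   Context: For a simple graph $G$ on vertex set $\{0,1,\dots,n\}$, the signless Laplacian $\mathcal Q_G$ is the $(n+1)\times(n+1)$ matrix with $(\mathcal Q_G)_{ii}=\deg(i)$ and, for $i\ne j$, $(\mathcal Q_G)_{ij}$ equal to the number of edges between $i$ and $j$; the reduced signless Laplacian $\tilde{\mathcal Q}_G$ is obtained by deleting the row and column of vertex $0$. The ideal $M_n^{(1)}$ is the $1$-skeleton ideal of $K_{n+1}$ (generated by $m_\sigma=\prod_{i\in\sigma}x_i^{\#\{j\notin\sigma:\ j\sim i\}}$ for $\sigma\subseteq\{1,\dots,n\}$, $1\le|\sigma|\le2$). *)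

theory Defs
  imports "HOL-Library.Poly_Mapping" "Jordan_Normal_Form.Determinant"
begin

text \<open>Multivariate polynomials over a field: finitely supported maps from
monomials (exponent vectors \<open>nat \<Rightarrow>\<^sub>0 nat\<close>) to coefficients.\<close>
type_synonym 'k mpoly = "(nat \<Rightarrow>\<^sub>0 nat) \<Rightarrow>\<^sub>0 'k"

text \<open>The polynomial ring \<open>S = K[x_1,...,x_n]\<close> as the subring of polynomials
involving only the variables \<open>x_1,...,x_n\<close>.\<close>
definition polyring :: "nat \<Rightarrow> ('k::field) mpoly set" where
  "polyring n = {p. \<forall>m \<in> Poly_Mapping.keys p. Poly_Mapping.keys m \<subseteq> {1..n}}"

definition var :: "nat \<Rightarrow> ('k::field) mpoly" where
  "var i = Poly_Mapping.single (Poly_Mapping.single i 1) 1"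

definition const :: "'k::field \<Rightarrow> 'k mpoly" where
  "const c = Poly_Mapping.single 0 c"

definition ideal_gen :: "nat \<Rightarrow> ('k::field) mpoly set \<Rightarrow> 'k mpoly set" where
  "ideal_gen n G = {\<Sum>g\<in>G. h g * g | h. \<forall>g\<in>G. h g \<in> polyring n}"

definition M1 :: "nat \<Rightarrow> ('k::field) mpoly set" where
  "M1 n = ideal_gen n
     ({var i ^ n | i. 1 \<le> i \<and> i \<le> n} \<union>
      {var i ^ (n - 1) * var j ^ (n - 1) | i j. 1 \<le> i \<and> i < j \<and> j \<le> n})"

text \<open>\<open>B\<close> is (a set of representatives of) a \<open>K\<close>-basis of the quotient \<open>S/I\<close>:
the classes of \<open>B\<close> are linearly independent modulo \<open>I\<close> and span \<open>S\<close> modulo \<open>I\<close>;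
distinct elements of \<open>B\<close> represent distinct classes.\<close>
definition quot_basis :: "nat \<Rightarrow> ('k::field) mpoly set \<Rightarrow> 'k mpoly set \<Rightarrow> bool" where
  "quot_basis n I B \<longleftrightarrow> finite B \<and> B \<subseteq> polyring n \<and>
     (\<forall>c. (\<Sum>b\<in>B. const (c b) * b) \<in> I \<longrightarrow> (\<forall>b\<in>B. c b = 0)) \<and>
     (\<forall>f \<in> polyring n. \<exists>c. f - (\<Sum>b\<in>B. const (c b) * b) \<in> I)"

text \<open>\<open>dim_K S/I\<close> (for finite-dimensional quotients).\<close>
definition quot_dim :: "nat \<Rightarrow> ('k::field) mpoly set \<Rightarrow> nat" where
  "quot_dim n I = (THE d. \<exists>B. quot_basis n I B \<and> card B = d)"

definition redQ_complete :: "nat \<Rightarrow> int mat" where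
  "redQ_complete n = mat n n (\<lambda>(i,j). if i = j then int n else 1)"

end

theory Submission
  imports Defs
begin

(* M_n^(1) is generated by monomials, so a polynomial lies in it exactly when its coefficients at
   the standard monomials (those divisible by no generator) vanish.  Taking the standard part of a
   polynomial therefore identifies S/M_n^(1) with the span of the standard monomials: they form a
   basis of the quotient, and every basis of the quotient has as many elements.  A monomial x^a is
   standard iff all a_i <= n - 1 and at most one a_i equals n - 1, so there are
   (n-1)^n + n (n-1)^(n-1) = (2n-1) (n-1)^(n-1) of them.  The reduced signless Laplacian of K_(n+1)
   is (n-1) I + J, whose determinant is the same number. *)

lemma det_const_diag_offdiag:
  fixes a b :: "'a::comm_ring_1"
  assumes "n \<ge> 1"
  shows "det (mat n n (\<lambda>(i,j). if i = j then a else b))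
    = (a + of_nat (n - 1) * b) * (a - b) ^ (n - 1)"
proof -
  \<comment> \<open>E adds all rows to the first one; then E A = C E with C lower triangular.\<close>
  define A where "A = mat n n (\<lambda>(i,j). if i = j then a else b)"
  define E :: "'a mat" where "E = mat n n (\<lambda>(i,j). if i = 0 \<or> i = j then 1 else 0)"
  define C :: "'a mat" where "C = mat n n (\<lambda>(i,j).
      if j = 0 then (if i = 0 then a + of_nat (n - 1) * b else b) else if i = j then a - b else 0)"
  have A: "A \<in> carrier_mat n n" and E: "E \<in> carrier_mat n n" and C: "C \<in> carrier_mat n n"
    by (simp_all add: A_def E_def C_def)
  have "det E = prod_list (diag_mat E)"
    by (rule det_upper_triangular[OF _ E]) (auto simp: upper_triangular_def E_def)
  hence "det E = 1"
    using E by (auto simp: E_def prod_list_diag_prod intro!: prod.neutral)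
  moreover have "det C = (a + of_nat (n - 1) * b) * (a - b) ^ (n - 1)"
  proof -
    have "det C = (\<Prod>i = 0..<n. C $$ (i,i))"
      using det_lower_triangular[OF _ C] C by (simp add: C_def prod_list_diag_prod)
    also have "\<dots> = C $$ (0,0) * (\<Prod>i = 1..<n. a - b)"
      using assms by (simp add: prod.atLeast_Suc_lessThan C_def)
    finally show ?thesis using assms by (simp add: C_def)
  qed
  moreover have "E * A = C * E"
  proof (rule eq_matI)
    fix i j assume "i < dim_row (C * E)" "j < dim_col (C * E)"
    hence i: "i < n" and j: "j < n" using C E by auto
    have lhs: "(E * A) $$ (i,j) = (\<Sum>k = 0..<n. E $$ (i,k) * A $$ (k,j))"
      and rhs: "(C * E) $$ (i,j) = (\<Sum>k = 0..<n. C $$ (i,k) * E $$ (k,j))"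
      using i j A C E by (simp_all add: scalar_prod_def)
    show "(E * A) $$ (i,j) = (C * E) $$ (i,j)"
    proof (cases "i = 0")
      case True
      have "(\<Sum>k = 0..<n. E $$ (i,k) * A $$ (k,j)) = (\<Sum>k \<in> {0..<n} - {j}. b) + a"
        using j True by (simp add: sum.remove[of _ j] A_def E_def)
      also have "\<dots> = a + of_nat (n - 1) * b"
        using j by (simp add: algebra_simps)
      also have "\<dots> = (\<Sum>k = 0..<n. C $$ (i,k) * E $$ (k,j))"
        using assms j True by (simp add: sum.remove[of _ 0] C_def E_def)
      finally show ?thesis using lhs rhs by simp
    next
      case False
      have "(\<Sum>k = 0..<n. E $$ (i,k) * A $$ (k,j)) = A $$ (i,j)"
        using i j False by (simp add: sum.remove[of _ i] E_def)
      moreover have "(\<Sum>k = 0..<n. C $$ (i,k) * E $$ (k,j)) = b + (if j = i then a - b else 0)"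
        using assms i j False
        by (simp add: sum.remove[of _ 0] C_def E_def if_distrib[of "\<lambda>x. x * _"] cong: if_cong)
      ultimately show ?thesis using lhs rhs i j by (simp add: A_def)
    qed
  qed (use A C E in auto)
  ultimately show ?thesis
    using det_mult[OF E A] det_mult[OF C E] by (simp add: A_def)
qed

definition monomial :: "(nat \<Rightarrow>\<^sub>0 nat) \<Rightarrow> ('k::field) mpoly" where
  "monomial s = Poly_Mapping.single s 1"

lemma keys_monomial [simp]: "Poly_Mapping.keys (monomial s :: 'k::field mpoly) = {s}"
  by (simp add: monomial_def)

lemma lookup_monomial: "Poly_Mapping.lookup (monomial s :: 'k::field mpoly) t = (if s = t then 1 else 0)"
  by (simp add: monomial_def lookup_single when_def)

lemma inj_monomial: "inj (monomial :: _ \<Rightarrow> 'k::field mpoly)"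
  by (rule injI) (metis keys_monomial singleton_inject)

lemma const_mult_monomial: "const c * monomial s = Poly_Mapping.single s c"
  by (simp add: const_def monomial_def mult_single)

lemma lookup_const_mult: "Poly_Mapping.lookup (const c * p) k = c * Poly_Mapping.lookup p k"
  unfolding const_def mult_map_scale_conv_mult[symmetric]
  by (simp add: Poly_Mapping.map.rep_eq when_def)

lemma lookup_monomial_combination:
  assumes "finite S" "s \<in> S"
  shows "Poly_Mapping.lookup (\<Sum>t\<in>S. const (c t) * (monomial t :: 'k::field mpoly)) s = c s"
  using assms by (simp add: lookup_sum const_mult_monomial lookup_single when_def)

lemma var_power: "var i ^ k = (monomial (Poly_Mapping.single i k) :: 'k::field mpoly)"
  by (induction k) (simp_all add: var_def monomial_def mult_single flip: single_add)

lemma sum_single_lookup: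
  "(\<Sum>m\<in>Poly_Mapping.keys p. Poly_Mapping.single m (Poly_Mapping.lookup p m)) = p"
  by (rule poly_mapping_eqI) (simp add: lookup_sum lookup_single when_def in_keys_iff)

lemma exists_add_iff_lookup_le:
  fixes e m :: "'a \<Rightarrow>\<^sub>0 nat"
  shows "(\<exists>d. m = d + e) \<longleftrightarrow> (\<forall>k. Poly_Mapping.lookup e k \<le> Poly_Mapping.lookup m k)"
proof
  assume "\<forall>k. Poly_Mapping.lookup e k \<le> Poly_Mapping.lookup m k"
  hence "m = (m - e) + e"
    by (intro poly_mapping_eqI) (simp add: lookup_add lookup_minus)
  thus "\<exists>d. m = d + e" ..
qed (auto simp: lookup_add)

lemma polyring_zero: "0 \<in> polyring n"
  by (simp add: polyring_def)

lemma polyring_add: "p \<in> polyring n \<Longrightarrow> q \<in> polyring n \<Longrightarrow> p + q \<in> polyring n"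
  unfolding polyring_def using keys_add[of p q] by blast

lemma polyring_diff: "p \<in> polyring n \<Longrightarrow> q \<in> polyring n \<Longrightarrow> p - q \<in> polyring n"
  unfolding polyring_def using keys_diff[of p q] by blast

lemma polyring_const_mult: "p \<in> polyring n \<Longrightarrow> const c * p \<in> polyring n"
proof -
  have "Poly_Mapping.keys (const c * p) \<subseteq> Poly_Mapping.keys p"
    by (auto simp: in_keys_iff lookup_const_mult)
  thus "p \<in> polyring n \<Longrightarrow> const c * p \<in> polyring n" unfolding polyring_def by blast
qed

lemma polyring_sum: "(\<And>a. a \<in> A \<Longrightarrow> f a \<in> polyring n) \<Longrightarrow> sum f A \<in> polyring n"
  by (induction A rule: infinite_finite_induct) (auto intro: polyring_add polyring_zero)

lemma ideal_genI: "(\<And>g. g \<in> G \<Longrightarrow> h g \<in> polyring n) \<Longrightarrow> (\<Sum>g\<in>G. h g * g) \<in> ideal_gen n G"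
  unfolding ideal_gen_def by blast

lemma ideal_gen_zero: "0 \<in> ideal_gen n G"
  using ideal_genI[of G "\<lambda>_. 0"] by (simp add: polyring_zero)

lemma ideal_gen_add:
  assumes "p \<in> ideal_gen n G" "q \<in> ideal_gen n G"
  shows "p + q \<in> ideal_gen n G"
proof -
  obtain h1 h2 where p: "p = (\<Sum>g\<in>G. h1 g * g)" and q: "q = (\<Sum>g\<in>G. h2 g * g)"
    and h: "\<forall>g\<in>G. h1 g \<in> polyring n \<and> h2 g \<in> polyring n"
    using assms unfolding ideal_gen_def by blast
  have "p + q = (\<Sum>g\<in>G. (h1 g + h2 g) * g)"
    unfolding p q by (simp add: sum.distrib distrib_right)
  also have "\<dots> \<in> ideal_gen n G"
    by (rule ideal_genI) (use h polyring_add in blast)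
  finally show ?thesis .
qed

lemma ideal_gen_sum: "(\<And>a. a \<in> A \<Longrightarrow> f a \<in> ideal_gen n G) \<Longrightarrow> sum f A \<in> ideal_gen n G"
  by (induction A rule: infinite_finite_induct) (auto intro: ideal_gen_add ideal_gen_zero)

lemma ideal_gen_mult_generator:
  assumes "finite G" "g \<in> G" "q \<in> polyring n"
  shows "q * g \<in> ideal_gen n G"
proof -
  have "(\<Sum>g'\<in>G. (if g' = g then q else 0) * g') = q * g"
    using assms by (simp add: if_distrib[of "\<lambda>x. x * _"] cong: if_cong)
  moreover have "(\<Sum>g'\<in>G. (if g' = g then q else 0) * g') \<in> ideal_gen n G"
    by (rule ideal_genI) (simp add: assms polyring_zero)
  ultimately show ?thesis by simp
qed

text \<open>Exponent vectors stand for monomials; \<open>m = d + e\<close> says that \<open>x^e\<close> divides \<open>x^m\<close>.\<close>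

definition standard_monomials :: "nat \<Rightarrow> (nat \<Rightarrow>\<^sub>0 nat) set \<Rightarrow> (nat \<Rightarrow>\<^sub>0 nat) set" where
  "standard_monomials n E = {m. Poly_Mapping.keys m \<subseteq> {1..n} \<and> (\<forall>e\<in>E. \<forall>d. m \<noteq> d + e)}"

lemma lookup_standard_monomial_ideal_gen:
  assumes p: "p \<in> ideal_gen n (monomial ` E :: 'k::field mpoly set)"
    and s: "s \<in> standard_monomials n E"
  shows "Poly_Mapping.lookup p s = 0"
proof -
  obtain h where p: "p = (\<Sum>g\<in>monomial ` E. h g * g)"
    using p unfolding ideal_gen_def by blast
  have "s \<notin> Poly_Mapping.keys (h g * g)" if "g \<in> monomial ` E" for g
  proof
    assume "s \<in> Poly_Mapping.keys (h g * g)"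
    then obtain d e where "e \<in> E" "s = d + e"
      using \<open>g \<in> monomial ` E\<close> keys_mult[of "h g" g] by auto
    thus False using s unfolding standard_monomials_def by blast
  qed
  thus ?thesis unfolding p lookup_sum by (simp add: in_keys_iff)
qed

lemma in_ideal_gen_monomialI:
  assumes E: "finite E" and p: "p \<in> polyring n"
    and std: "\<And>s. s \<in> standard_monomials n E \<Longrightarrow> Poly_Mapping.lookup p s = 0"
  shows "p \<in> ideal_gen n (monomial ` E :: 'k::field mpoly set)"
proof -
  have "Poly_Mapping.single m (Poly_Mapping.lookup p m) \<in> ideal_gen n (monomial ` E :: 'k mpoly set)"
    if m: "m \<in> Poly_Mapping.keys p" for m
  proof -
    have keys_m: "Poly_Mapping.keys m \<subseteq> {1..n}" using p m unfolding polyring_def by blast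
    moreover have "m \<notin> standard_monomials n E" using std m by (auto simp: in_keys_iff)
    ultimately obtain d e where e: "e \<in> E" and m_eq: "m = d + e"
      unfolding standard_monomials_def by blast
    have "Poly_Mapping.keys d \<subseteq> Poly_Mapping.keys m"
      by (auto simp: m_eq in_keys_iff lookup_add)
    hence "Poly_Mapping.single d (Poly_Mapping.lookup p m) \<in> polyring n"
      using keys_m unfolding polyring_def by auto
    hence "Poly_Mapping.single d (Poly_Mapping.lookup p m) * monomial e
        \<in> ideal_gen n (monomial ` E :: 'k mpoly set)"
      using E e by (intro ideal_gen_mult_generator) auto
    thus ?thesis by (simp add: monomial_def mult_single m_eq)
  qed
  hence "(\<Sum>m\<in>Poly_Mapping.keys p. Poly_Mapping.single m (Poly_Mapping.lookup p m))
      \<in> ideal_gen n (monomial ` E :: 'k mpoly set)"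
    by (rule ideal_gen_sum)
  thus ?thesis by (simp only: sum_single_lookup)
qed

lemma const_add: "const (a + b) = const a + const b"
  by (simp add: const_def single_add)

lemma const_mult: "const (a * b) = const a * (const b :: 'k::field mpoly)"
  by (simp add: const_def mult_single)

lemma const_one: "const 1 = (1 :: 'k::field mpoly)"
  by (simp add: const_def)

interpretation mpoly: vector_space "\<lambda>c (p :: 'k::field mpoly). const c * p"
  by unfold_locales (simp_all add: const_add const_mult const_one algebra_simps)

lemma independent_monomials: "finite S \<Longrightarrow> mpoly.independent (monomial ` S :: 'k::field mpoly set)"
proof (rule mpoly.independent_if_scalars_zero)
  fix f :: "'k mpoly \<Rightarrow> 'k" and x :: "'k mpoly"
  assume S: "finite S" and "(\<Sum>x\<in>monomial ` S. const (f x) * x) = 0" and "x \<in> monomial ` S"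
  then obtain s where "s \<in> S" "x = monomial s"
    and "(\<Sum>t\<in>S. const (f (monomial t)) * monomial t) = 0"
    by (auto simp: sum.reindex[OF inj_on_subset[OF inj_monomial]])
  thus "f x = 0" using lookup_monomial_combination[OF S, of s "\<lambda>t. f (monomial t)"] by auto
qed simp

locale monomial_ideal =
  fixes n :: nat and E :: "(nat \<Rightarrow>\<^sub>0 nat) set"
  assumes finite_exponents: "finite E"
    and finite_standard: "finite (standard_monomials n E)"
begin

abbreviation std where "std \<equiv> standard_monomials n E"

definition standard_part :: "'k::field mpoly \<Rightarrow> 'k mpoly" where
  "standard_part p = (\<Sum>s\<in>std. const (Poly_Mapping.lookup p s) * monomial s)"

lemma lookup_standard_part:
  "Poly_Mapping.lookup (standard_part p) t = (if t \<in> std then Poly_Mapping.lookup p t else 0)"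
  unfolding standard_part_def lookup_sum
  by (simp add: lookup_const_mult lookup_monomial finite_standard if_distrib[of "\<lambda>x. _ * x"] cong: if_cong)

lemma standard_part_polyring: "standard_part p \<in> polyring n"
  unfolding standard_part_def
  by (intro polyring_sum polyring_const_mult) (auto simp: polyring_def standard_monomials_def)

lemma standard_part_monomial: "s \<in> std \<Longrightarrow> standard_part (monomial s) = monomial s"
  by (rule poly_mapping_eqI) (auto simp: lookup_standard_part lookup_monomial)

lemma standard_part_idem: "standard_part (standard_part p) = standard_part p"
  by (rule poly_mapping_eqI) (simp add: lookup_standard_part)

lemma standard_part_diff: "standard_part (p - q) = standard_part p - standard_part q"
  by (rule poly_mapping_eqI) (simp add: lookup_standard_part lookup_minus)

lemma standard_part_linear_combination:
  "standard_part (\<Sum>b\<in>B. const (c b) * b) = (\<Sum>b\<in>B. const (c b) * standard_part b)"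
  by (rule poly_mapping_eqI) (simp add: lookup_standard_part lookup_sum lookup_const_mult)

lemma standard_part_ideal_gen:
  "p \<in> ideal_gen n (monomial ` E) \<Longrightarrow> standard_part p = (0 :: 'k::field mpoly)"
  by (rule poly_mapping_eqI) (simp add: lookup_standard_part lookup_standard_monomial_ideal_gen)

lemma standard_part_eq_0_iff:
  assumes "p \<in> polyring n"
  shows "standard_part p = 0 \<longleftrightarrow> p \<in> ideal_gen n (monomial ` E :: 'k::field mpoly set)"
proof
  assume "standard_part p = 0"
  hence "Poly_Mapping.lookup p s = 0" if "s \<in> std" for s
    using that lookup_standard_part[of p s] by simp
  thus "p \<in> ideal_gen n (monomial ` E)"
    using in_ideal_gen_monomialI[OF finite_exponents assms] by blast
qed (rule standard_part_ideal_gen)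

lemma quot_basis_standard_monomials:
  "quot_basis n (ideal_gen n (monomial ` E)) (monomial ` std :: 'k::field mpoly set)"
  unfolding quot_basis_def
proof (intro conjI allI impI ballI)
  show "finite (monomial ` std :: 'k mpoly set)" using finite_standard by simp
  show "monomial ` std \<subseteq> (polyring n :: 'k mpoly set)"
    by (auto simp: polyring_def standard_monomials_def)
next
  fix c :: "'k mpoly \<Rightarrow> 'k" and b :: "'k mpoly"
  assume "(\<Sum>b\<in>monomial ` std. const (c b) * b) \<in> ideal_gen n (monomial ` E)"
    and "b \<in> monomial ` std"
  moreover from this obtain s where s: "s \<in> std" "b = monomial s" by blast
  ultimately have "Poly_Mapping.lookup (\<Sum>t\<in>std. const (c (monomial t)) * monomial t) s = 0"
    using lookup_standard_monomial_ideal_gen by (simp add: sum.reindex[OF inj_on_subset[OF inj_monomial]])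
  thus "c b = 0"
    using lookup_monomial_combination[OF finite_standard s(1), of "\<lambda>t. c (monomial t)"] s(2) by simp
next
  fix f :: "'k mpoly" assume f: "f \<in> polyring n"
  define c where "c b = Poly_Mapping.lookup f (inv_into std monomial b)" for b :: "'k mpoly"
  have "(\<Sum>b\<in>monomial ` std. const (c b) * b) = standard_part f"
    unfolding standard_part_def c_def
    by (simp add: sum.reindex[OF inj_on_subset[OF inj_monomial]] inv_into_f_f[OF inj_on_subset[OF inj_monomial]])
  moreover have "standard_part (f - standard_part f) = 0"
    by (simp add: standard_part_diff standard_part_idem)
  hence "f - standard_part f \<in> ideal_gen n (monomial ` E)"
    using standard_part_eq_0_iff polyring_diff[OF f standard_part_polyring] by blast
  ultimately show "\<exists>c. f - (\<Sum>b\<in>monomial ` std. const (c b) * b) \<in> ideal_gen n (monomial ` E)"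
    by (intro exI[of _ c]) simp
qed

lemma standard_part_in_span: "standard_part p \<in> mpoly.span (monomial ` std)"
  unfolding standard_part_def
  by (intro mpoly.span_sum mpoly.span_scale mpoly.span_base) simp

context
  fixes B :: "'k::field mpoly set"
  assumes B: "quot_basis n (ideal_gen n (monomial ` E)) B"
begin

lemma quot_basis_standard_part_scalars_zero:
  assumes "(\<Sum>b\<in>B. const (c b) * standard_part b) = 0" and "b \<in> B"
  shows "c b = 0"
proof -
  have "B \<subseteq> polyring n" using B unfolding quot_basis_def by blast
  hence "(\<Sum>b\<in>B. const (c b) * b) \<in> ideal_gen n (monomial ` E)"
    using assms(1)
    by (subst standard_part_eq_0_iff[symmetric])
      (auto intro!: polyring_sum polyring_const_mult simp: standard_part_linear_combination)
  thus ?thesis using B \<open>b \<in> B\<close> unfolding quot_basis_def by blast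
qed

lemma inj_on_standard_part_quot_basis: "inj_on standard_part B"
proof (rule inj_onI, rule ccontr)
  fix b1 b2 assume b: "b1 \<in> B" "b2 \<in> B" "standard_part b1 = standard_part b2" "b1 \<noteq> b2"
  define c :: "'k mpoly \<Rightarrow> 'k" where "c b = (if b = b1 then 1 else if b = b2 then -1 else 0)" for b
  have "(\<Sum>b\<in>B. const (c b) * standard_part b)
      = (\<Sum>b\<in>B. (if b = b1 then standard_part b1 else 0) - (if b = b2 then standard_part b2 else 0))"
    by (rule sum.cong) (use b in \<open>auto simp: c_def const_one const_def single_uminus\<close>)
  also have "\<dots> = 0" using b B by (simp add: sum_subtractf quot_basis_def)
  finally have "c b1 = 0" using quot_basis_standard_part_scalars_zero b(1) by blast
  thus False by (simp add: c_def)
qed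

lemma independent_standard_part_quot_basis: "mpoly.independent (standard_part ` B)"
proof (rule mpoly.independent_if_scalars_zero)
  show "finite (standard_part ` B)" using B unfolding quot_basis_def by simp
next
  fix f x assume "(\<Sum>x\<in>standard_part ` B. const (f x) * x) = 0" and x: "x \<in> standard_part ` B"
  hence "(\<Sum>b\<in>B. const (f (standard_part b)) * standard_part b) = 0"
    by (simp add: sum.reindex[OF inj_on_standard_part_quot_basis])
  thus "f x = 0" using quot_basis_standard_part_scalars_zero x by auto
qed

lemma monomials_in_span_standard_part_quot_basis:
  "monomial ` std \<subseteq> mpoly.span (standard_part ` B)"
proof
  fix x :: "'k mpoly" assume "x \<in> monomial ` std"
  then obtain s where s: "s \<in> std" "x = monomial s" by blast
  have "monomial s \<in> polyring n"
    using s(1) by (auto simp: polyring_def standard_monomials_def)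
  then obtain c where "monomial s - (\<Sum>b\<in>B. const (c b) * b) \<in> ideal_gen n (monomial ` E)"
    using B unfolding quot_basis_def by blast
  hence "standard_part (monomial s - (\<Sum>b\<in>B. const (c b) * b)) = 0"
    by (rule standard_part_ideal_gen)
  hence "x = (\<Sum>b\<in>B. const (c b) * standard_part b)"
    using s by (simp add: standard_part_diff standard_part_linear_combination standard_part_monomial)
  also have "\<dots> \<in> mpoly.span (standard_part ` B)"
    by (intro mpoly.span_sum mpoly.span_scale mpoly.span_base) simp
  finally show "x \<in> mpoly.span (standard_part ` B)" .
qed

lemma card_quot_basis: "card B = card std"
proof -
  have "finite B" using B unfolding quot_basis_def by blast
  have "card (standard_part ` B) \<le> card (monomial ` std :: 'k mpoly set)"
    using mpoly.independent_span_bound[OF finite_imageI[OF finite_standard]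
        independent_standard_part_quot_basis] standard_part_in_span
    by auto
  moreover have "card (monomial ` std :: 'k mpoly set) \<le> card (standard_part ` B)"
    using mpoly.independent_span_bound[OF finite_imageI[OF \<open>finite B\<close>]
        independent_monomials[OF finite_standard] monomials_in_span_standard_part_quot_basis]
    by simp
  ultimately show ?thesis
    by (simp add: card_image[OF inj_on_standard_part_quot_basis] card_image[OF inj_on_subset[OF inj_monomial]])
qed

end

lemma quot_dim_eq_card_standard:
  "quot_dim n (ideal_gen n (monomial ` E) :: 'k::field mpoly set) = card std"
  unfolding quot_dim_def
proof (rule the_equality)
  show "\<exists>B. quot_basis n (ideal_gen n (monomial ` E) :: 'k mpoly set) B \<and> card B = card std"
    using quot_basis_standard_monomials card_image[OF inj_on_subset[OF inj_monomial]] by blast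
qed (use card_quot_basis in blast)

end

lemma bij_betw_restrict_lookup:
  assumes "finite A"
  shows "bij_betw (\<lambda>m. restrict (Poly_Mapping.lookup m) A)
           {m :: 'a \<Rightarrow>\<^sub>0 'b::zero. Poly_Mapping.keys m \<subseteq> A} (A \<rightarrow>\<^sub>E UNIV)"
proof -
  define extend :: "('a \<Rightarrow> 'b) \<Rightarrow> 'a \<Rightarrow>\<^sub>0 'b"
    where "extend f = Abs_poly_mapping (\<lambda>i. if i \<in> A then f i else 0)" for f
  have "finite {i. (if i \<in> A then f i else 0) \<noteq> 0}" for f :: "'a \<Rightarrow> 'b"
    by (rule finite_subset[OF _ assms]) auto
  hence lookup_extend: "Poly_Mapping.lookup (extend f) i = (if i \<in> A then f i else 0)" for f i
    by (simp add: extend_def)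
  show ?thesis
  proof (rule bij_betw_byWitness[where f' = extend])
    show "\<forall>m\<in>{m. Poly_Mapping.keys m \<subseteq> A}. extend (restrict (Poly_Mapping.lookup m) A) = m"
      by (auto intro!: poly_mapping_eqI simp: lookup_extend in_keys_iff)
    show "\<forall>f\<in>A \<rightarrow>\<^sub>E UNIV. restrict (Poly_Mapping.lookup (extend f)) A = f"
      by (auto simp: lookup_extend PiE_iff extensional_def fun_eq_iff)
    show "extend ` (A \<rightarrow>\<^sub>E UNIV) \<subseteq> {m. Poly_Mapping.keys m \<subseteq> A}"
      by (auto simp: lookup_extend in_keys_iff)
  qed auto
qed

definition PiE_max_at_most_once :: "'a set \<Rightarrow> 'b::order \<Rightarrow> ('a \<Rightarrow> 'b) set" where
  "PiE_max_at_most_once A k = {f \<in> A \<rightarrow>\<^sub>E {..k}. \<forall>i\<in>A. \<forall>j\<in>A. f i = k \<longrightarrow> f j = k \<longrightarrow> i = j}"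

lemma PiE_max_at_most_once_eq:
  "PiE_max_at_most_once A k = (A \<rightarrow>\<^sub>E {..<k}) \<union> (\<Union>i\<in>A. PiE A (\<lambda>j. if j = i then {k} else {..<k}))"
  unfolding PiE_max_at_most_once_def
proof (intro equalityI subsetI)
  fix f assume "f \<in> {f \<in> A \<rightarrow>\<^sub>E {..k}. \<forall>i\<in>A. \<forall>j\<in>A. f i = k \<longrightarrow> f j = k \<longrightarrow> i = j}"
  hence f: "f \<in> A \<rightarrow>\<^sub>E {..k}"
    and unique: "\<And>i j. i \<in> A \<Longrightarrow> j \<in> A \<Longrightarrow> f i = k \<Longrightarrow> f j = k \<Longrightarrow> i = j"
    by auto
  show "f \<in> (A \<rightarrow>\<^sub>E {..<k}) \<union> (\<Union>i\<in>A. PiE A (\<lambda>j. if j = i then {k} else {..<k}))"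
  proof (cases "\<exists>i\<in>A. f i = k")
    case True
    then obtain i where "i \<in> A" "f i = k" by blast
    have "f j \<in> (if j = i then {k} else {..<k})" if "j \<in> A" for j
    proof (cases "j = i")
      case False
      hence "f j \<noteq> k" using unique \<open>i \<in> A\<close> \<open>f i = k\<close> that by blast
      moreover have "f j \<le> k" using f that by auto
      ultimately show ?thesis using False by (simp add: order.strict_iff_order)
    qed (simp add: \<open>f i = k\<close>)
    hence "f \<in> PiE A (\<lambda>j. if j = i then {k} else {..<k})"
      using f by (simp add: PiE_iff)
    thus ?thesis using \<open>i \<in> A\<close> by blast
  next
    case False
    thus ?thesis using f by (fastforce simp: PiE_iff)
  qed
next
  fix f assume "f \<in> (A \<rightarrow>\<^sub>E {..<k}) \<union> (\<Union>i\<in>A. PiE A (\<lambda>j. if j = i then {k} else {..<k}))"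
  thus "f \<in> {f \<in> A \<rightarrow>\<^sub>E {..k}. \<forall>i\<in>A. \<forall>j\<in>A. f i = k \<longrightarrow> f j = k \<longrightarrow> i = j}"
  proof
    assume "f \<in> (\<Union>i\<in>A. PiE A (\<lambda>j. if j = i then {k} else {..<k}))"
    then obtain i where "i \<in> A" "f \<in> PiE A (\<lambda>j. if j = i then {k} else {..<k})" by blast
    hence f: "f \<in> extensional A" "f i = k" "\<And>j. j \<in> A \<Longrightarrow> j \<noteq> i \<Longrightarrow> f j < k"
      by (auto simp: PiE_iff dest: bspec[of _ _ i])
    hence "f j \<le> k" if "j \<in> A" for j
      using that by (cases "j = i") (auto intro: less_imp_le)
    moreover have "j = i" if "j \<in> A" "f j = k" for j
      using that f by (metis less_irrefl)
    ultimately show ?thesis using f by (auto simp: PiE_iff) metis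
  qed (auto simp: PiE_iff)
qed

lemma card_PiE_max_at_most_once:
  assumes A: "finite A"
  shows "card (PiE_max_at_most_once A k) = k ^ card A + card A * k ^ (card A - 1)"
proof -
  define Q where "Q i = PiE A (\<lambda>j. if j = i then {k} else {..<k})" for i
  have card_Q: "card (Q i) = k ^ (card A - 1)" if "i \<in> A" for i
  proof -
    have "card (Q i) = (\<Prod>j\<in>A. if j = i then 1 else k)"
      unfolding Q_def card_PiE[OF A] by (rule prod.cong) auto
    also have "\<dots> = k ^ (card A - 1)"
      using that A by (simp add: prod.If_cases Int_absorb1 card_Diff_singleton flip: Diff_eq)
    finally show ?thesis .
  qed
  have "Q i \<inter> Q j = {}" if "i \<in> A" "i \<noteq> j" for i j
    using that by (auto simp: Q_def PiE_iff dest!: bspec[of _ _ i])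
  hence "card (\<Union>i\<in>A. Q i) = card A * k ^ (card A - 1)"
    using A card_Q by (subst card_UN_disjoint) (auto simp: Q_def finite_PiE)
  moreover have "(A \<rightarrow>\<^sub>E {..<k}) \<inter> Q i = {}" if "i \<in> A" for i
    using that by (auto simp: Q_def PiE_iff dest!: bspec[of _ _ i])
  ultimately show ?thesis
    unfolding PiE_max_at_most_once_eq Q_def[symmetric] using A
    by (subst card_Un_disjoint) (auto simp: card_PiE Q_def finite_PiE)
qed

lemma restrict_in_PiE_max_at_most_once_iff:
  "restrict g A \<in> PiE_max_at_most_once A k \<longleftrightarrow>
    (\<forall>i\<in>A. g i \<le> k) \<and> (\<forall>i\<in>A. \<forall>j\<in>A. g i = k \<longrightarrow> g j = k \<longrightarrow> i = j)"
  by (auto simp: PiE_max_at_most_once_def PiE_iff)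

definition M1_exponents :: "nat \<Rightarrow> (nat \<Rightarrow>\<^sub>0 nat) set" where
  "M1_exponents n = {Poly_Mapping.single i n | i. 1 \<le> i \<and> i \<le> n} \<union>
     {Poly_Mapping.single i (n - 1) + Poly_Mapping.single j (n - 1) | i j. 1 \<le> i \<and> i < j \<and> j \<le> n}"

lemma M1_eq_ideal_gen_monomial: "M1 n = ideal_gen n (monomial ` M1_exponents n :: 'k::field mpoly set)"
proof -
  have "{var i ^ n | i. 1 \<le> i \<and> i \<le> n}
      = (monomial ` {Poly_Mapping.single i n | i. 1 \<le> i \<and> i \<le> n} :: 'k mpoly set)"
    by (auto simp: var_power)
  moreover have "{var i ^ (n - 1) * var j ^ (n - 1) | i j. 1 \<le> i \<and> i < j \<and> j \<le> n}
      = (monomial ` {Poly_Mapping.single i (n - 1) + Poly_Mapping.single j (n - 1) | i j.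
          1 \<le> i \<and> i < j \<and> j \<le> n} :: 'k mpoly set)"
    by (auto simp: var_power monomial_def mult_single)
  ultimately show ?thesis unfolding M1_def M1_exponents_def image_Un by simp
qed

lemma finite_M1_exponents: "finite (M1_exponents n)"
proof -
  have "M1_exponents n \<subseteq> (\<lambda>i. Poly_Mapping.single i n) ` {1..n} \<union>
      (\<lambda>(i, j). Poly_Mapping.single i (n - 1) + Poly_Mapping.single j (n - 1)) ` ({1..n} \<times> {1..n})"
    unfolding M1_exponents_def by force
  thus ?thesis by (rule finite_subset) simp
qed

lemma exists_add_single_iff:
  fixes m :: "'a \<Rightarrow>\<^sub>0 nat"
  shows "(\<exists>d. m = d + Poly_Mapping.single i a) \<longleftrightarrow> a \<le> Poly_Mapping.lookup m i"
  unfolding exists_add_iff_lookup_le by (auto simp: lookup_single when_def dest: spec[of _ i])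

lemma exists_add_two_singles_iff:
  fixes m :: "'a \<Rightarrow>\<^sub>0 nat"
  assumes "i \<noteq> j"
  shows "(\<exists>d. m = d + (Poly_Mapping.single i a + Poly_Mapping.single j b))
    \<longleftrightarrow> a \<le> Poly_Mapping.lookup m i \<and> b \<le> Poly_Mapping.lookup m j"
  unfolding exists_add_iff_lookup_le
  using assms by (auto simp: lookup_add lookup_single when_def dest: spec[of _ i] spec[of _ j])

lemma exists_M1_exponent_add_iff:
  "(\<exists>e\<in>M1_exponents n. \<exists>d. m = d + e) \<longleftrightarrow>
    (\<exists>i\<in>{1..n}. n \<le> Poly_Mapping.lookup m i) \<or>
    (\<exists>i\<in>{1..n}. \<exists>j\<in>{1..n}. i < j \<and> n - 1 \<le> Poly_Mapping.lookup m i \<and> n - 1 \<le> Poly_Mapping.lookup m j)"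
proof -
  have "(\<exists>e\<in>M1_exponents n. R e) \<longleftrightarrow> (\<exists>i\<in>{1..n}. R (Poly_Mapping.single i n)) \<or>
      (\<exists>i\<in>{1..n}. \<exists>j\<in>{1..n}. i < j \<and> R (Poly_Mapping.single i (n - 1) + Poly_Mapping.single j (n - 1)))"
    for R
    unfolding M1_exponents_def by auto blast
  thus ?thesis by (simp add: exists_add_single_iff exists_add_two_singles_iff cong: conj_cong)
qed

lemma standard_monomials_M1:
  assumes "n \<ge> 1"
  shows "standard_monomials n (M1_exponents n) = {m. Poly_Mapping.keys m \<subseteq> {1..n} \<and>
    restrict (Poly_Mapping.lookup m) {1..n} \<in> PiE_max_at_most_once {1..n} (n - 1)}"
proof -
  have bounds: "\<not> ((\<exists>i\<in>A. n \<le> g i) \<or> (\<exists>i\<in>A. \<exists>j\<in>A. i < j \<and> n - 1 \<le> g i \<and> n - 1 \<le> g j))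
    \<longleftrightarrow> (\<forall>i\<in>A. g i \<le> n - 1) \<and> (\<forall>i\<in>A. \<forall>j\<in>A. g i = n - 1 \<longrightarrow> g j = n - 1 \<longrightarrow> i = j)"
    for A and g :: "nat \<Rightarrow> nat"
  proof (cases "\<forall>i\<in>A. g i \<le> n - 1")
    case True
    have no_large: "\<not> (\<exists>i\<in>A. n \<le> g i)" using True assms by force
    have "n - 1 \<le> g i \<longleftrightarrow> g i = n - 1" if "i \<in> A" for i
      using True that by fastforce
    hence tops: "(\<exists>i\<in>A. \<exists>j\<in>A. i < j \<and> n - 1 \<le> g i \<and> n - 1 \<le> g j)
        \<longleftrightarrow> (\<exists>i\<in>A. \<exists>j\<in>A. i < j \<and> g i = n - 1 \<and> g j = n - 1)"
      by (metis (no_types, lifting))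
    have "(\<exists>i\<in>A. \<exists>j\<in>A. i < j \<and> g i = n - 1 \<and> g j = n - 1)
        \<longleftrightarrow> \<not> (\<forall>i\<in>A. \<forall>j\<in>A. g i = n - 1 \<longrightarrow> g j = n - 1 \<longrightarrow> i = j)"
      by (metis linorder_neq_iff)
    with True no_large tops show ?thesis by argo
  qed (use assms in auto)
  show ?thesis
    unfolding standard_monomials_def
  proof (intro Collect_cong conj_cong refl)
    fix m :: "nat \<Rightarrow>\<^sub>0 nat"
    have "(\<forall>e\<in>M1_exponents n. \<forall>d. m \<noteq> d + e) \<longleftrightarrow> \<not> (\<exists>e\<in>M1_exponents n. \<exists>d. m = d + e)"
      by blast
    thus "(\<forall>e\<in>M1_exponents n. \<forall>d. m \<noteq> d + e) \<longleftrightarrow>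
        restrict (Poly_Mapping.lookup m) {1..n} \<in> PiE_max_at_most_once {1..n} (n - 1)"
      unfolding restrict_in_PiE_max_at_most_once_iff exists_M1_exponent_add_iff bounds .
  qed
qed

lemma standard_monomials_M1_finite_card:
  assumes "n \<ge> 1"
  shows "finite (standard_monomials n (M1_exponents n))"
    and "card (standard_monomials n (M1_exponents n)) = (n - 1) ^ n + n * (n - 1) ^ (n - 1)"
proof -
  let ?P = "PiE_max_at_most_once {1..n} (n - 1)"
  have "?P = {f \<in> {1..n} \<rightarrow>\<^sub>E UNIV. f \<in> ?P}"
    by (auto simp: PiE_max_at_most_once_def)
  hence bij: "bij_betw (\<lambda>m. restrict (Poly_Mapping.lookup m) {1..n}) (standard_monomials n (M1_exponents n)) ?P"
    using bij_betw_Collect[OF bij_betw_restrict_lookup[of "{1..n}"], of "\<lambda>f. f \<in> ?P"]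
    by (simp add: standard_monomials_M1[OF assms])
  show "finite (standard_monomials n (M1_exponents n))"
    using bij_betw_finite[OF bij] by (simp add: PiE_max_at_most_once_def finite_PiE)
  show "card (standard_monomials n (M1_exponents n)) = (n - 1) ^ n + n * (n - 1) ^ (n - 1)"
    using bij_betw_same_card[OF bij] card_PiE_max_at_most_once[of "{1..n}" "n - 1"] by simp
qed

theorem corollary3p4:
  fixes n :: nat
  assumes "n \<ge> 1"
  shows "(\<exists>B. quot_basis n (M1 n :: ('k::field) mpoly set) B) \<and>
         int (quot_dim n (M1 n :: 'k mpoly set)) = det (redQ_complete n)"
proof -
  interpret monomial_ideal n "M1_exponents n"
    using finite_M1_exponents standard_monomials_M1_finite_card(1)[OF assms] by unfold_locales
  have "quot_basis n (M1 n :: 'k mpoly set) (monomial ` std)"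
    unfolding M1_eq_ideal_gen_monomial by (rule quot_basis_standard_monomials)
  moreover have "quot_dim n (M1 n :: 'k mpoly set) = (n - 1) ^ n + n * (n - 1) ^ (n - 1)"
    unfolding M1_eq_ideal_gen_monomial quot_dim_eq_card_standard
    by (rule standard_monomials_M1_finite_card(2)[OF assms])
  moreover have "det (redQ_complete n) = (int n + int (n - 1)) * (int n - 1) ^ (n - 1)"
    unfolding redQ_complete_def using det_const_diag_offdiag[OF assms, of "int n" 1] by simp
  moreover obtain k where "n = Suc k" using assms by (cases n) auto
  ultimately show ?thesis by (auto simp: algebra_simps)
qed

end
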